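(* Let $J\subseteq[-\infty,+\infty]$ be a nonempty closed interval and let $f\colon J^n\to\mathbb{R}$ be a real-valued quasi-polynomial function on $J$. Then $f$ is comonotonically modular, and for every permutation $\sigma$ of $[n]$ there exist functions $f^\sigma_i\colon J\to\mathbb{R}$, $i\in[n]$, such that $$f(\mathbf{x})=\sum_{i=1}^n f^\sigma_i(x_{\sigma(i)})\qquad\text{for all }\mathbf{x}\in J^n\text{ with }x_{\sigma(1)}\leq\cdots\leq x_{\sigma(n)}.$$
   Context: $[n]=\{1,\ldots,n\}$. A lattice polynomial function on $\overline{\mathbb{R}}=[-\infty,+\infty]$ is a map $p\colon\overline{\mathbb{R}}^n\to\overline{\mathbb{R}}$ that can be expressed as a combination of the variables and constants of $\overline{\mathbb{R}}$ using the binary operations $\min$ and $\max$. A quasi-polynomial function on $J$ is a map $f\colon J^n\to\overline{\mathbb{R}}$ of the form $f(\mathbf{x})=p(\varphi(x_1),\ldots,\varphi(x_n))$, where $p$ is a lattice polynomial function on $\overline{\mathbb{R}}$ and $\varphi\colon J\to\overline{\mathbb{R}}$ is nondecreasing. Two tuples $\mathbf{x},\mathbf{x}'\in J^n$ are comonotonic if there is a permutation $\sigma$ of $[n]$ with $x_{\sigma(1)}\leq\cdots\leq x_{\sigma(n)}$ and $x'_{\sigma(1)}\leq\cdots\leq x'_{\sigma(n)}$. A real-valued $f\colon J^n\to\mathbb{R}$ is comonotonically modular if $f(\mathbf{x})+f(\mathbf{x}')=f(\mathbf{x}\wedge\mathbf{x}')+f(\mathbf{x}\vee\mathbf{x}')$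 for all comonotonic $\mathbf{x},\mathbf{x}'\in J^n$, where $\wedge,\vee$ are componentwise min and max. *)

theory Defs
  imports "HOL-Library.Extended_Real" "HOL-Combinatorics.Permutations"
begin

datatype lpoly = Var nat | Const ereal | Min lpoly lpoly | Max lpoly lpoly

fun lp_eval :: "lpoly \<Rightarrow> (nat \<Rightarrow> ereal) \<Rightarrow> ereal" where
  "lp_eval (Var i) x = x i"
| "lp_eval (Const c) x = c"
| "lp_eval (Min p q) x = min (lp_eval p x) (lp_eval q x)"
| "lp_eval (Max p q) x = max (lp_eval p x) (lp_eval q x)"

fun lp_vars :: "lpoly \<Rightarrow> nat set" where
  "lp_vars (Var i) = {i}"
| "lp_vars (Const c) = {}"
| "lp_vars (Min p q) = lp_vars p \<union> lp_vars q"
| "lp_vars (Max p q) = lp_vars p \<union> lp_vars q"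

definition tuples :: "nat \<Rightarrow> ereal set \<Rightarrow> (nat \<Rightarrow> ereal) set" where
  "tuples n J = PiE {1..n} (\<lambda>_. J)"

definition quasi_polynomial :: "nat \<Rightarrow> ereal set \<Rightarrow> ((nat \<Rightarrow> ereal) \<Rightarrow> real) \<Rightarrow> bool" where
  "quasi_polynomial n J f \<longleftrightarrow>
     (\<exists>p \<phi>. lp_vars p \<subseteq> {1..n} \<and> mono_on J \<phi> \<and>
        (\<forall>x \<in> tuples n J. ereal (f x) = lp_eval p (\<lambda>i. \<phi> (x i))))"

definition comonotonic :: "nat \<Rightarrow> (nat \<Rightarrow> ereal) \<Rightarrow> (nat \<Rightarrow> ereal) \<Rightarrow> bool" where
  "comonotonic n x x' \<longleftrightarrow>
     (\<exists>\<sigma>. \<sigma> permutes {1..n} \<and>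
        (\<forall>i j. 1 \<le> i \<and> i \<le> j \<and> j \<le> n \<longrightarrow> x (\<sigma> i) \<le> x (\<sigma> j) \<and> x' (\<sigma> i) \<le> x' (\<sigma> j)))"

definition tmin :: "nat \<Rightarrow> (nat \<Rightarrow> ereal) \<Rightarrow> (nat \<Rightarrow> ereal) \<Rightarrow> (nat \<Rightarrow> ereal)" where
  "tmin n x x' = (\<lambda>i\<in>{1..n}. min (x i) (x' i))"

definition tmax :: "nat \<Rightarrow> (nat \<Rightarrow> ereal) \<Rightarrow> (nat \<Rightarrow> ereal) \<Rightarrow> (nat \<Rightarrow> ereal)" where
  "tmax n x x' = (\<lambda>i\<in>{1..n}. max (x i) (x' i))"

definition comonotonically_modular :: "nat \<Rightarrow> ereal set \<Rightarrow> ((nat \<Rightarrow> ereal) \<Rightarrow> real) \<Rightarrow> bool" where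
  "comonotonically_modular n J f \<longleftrightarrow>
     (\<forall>x \<in> tuples n J. \<forall>x' \<in> tuples n J. comonotonic n x x' \<longrightarrow>
        f x + f x' = f (tmin n x x') + f (tmax n x x'))"

end

theory Submission
  imports Defs
begin

(* Call two tuples y, y' concordant
   if no pair of coordinates is ordered strictly oppositely by them. Then for every
   threshold t the upper level sets {i. t <= y i} and {i. t <= y' i} are nested, and since
   "t <= p(y)" depends monotonically on the upper level set of y at t, p commutes with
   componentwise min and max on concordant pairs. Comonotonic tuples are concordant and
   concordance survives a nondecreasing phi, which gives modularity.

   The second half fixes sigma and a least element a of J. Truncating a sorted tuple x
   after its k-th smallest coordinate and comparing with the step tuple that is a on the
   first k coordinates yields a comonotonic pair whose meet and join are again a step
   tuple and the next truncation; modularity then telescopes to the additive form. *)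

lemma lp_eval_cong:
  assumes "lp_vars p \<subseteq> V" and "\<And>i. i \<in> V \<Longrightarrow> y i = z i"
  shows "lp_eval p y = lp_eval p z"
  using assms by (induction p) auto

lemma lp_eval_threshold_mono:
  assumes "lp_vars p \<subseteq> V" and "\<And>i. i \<in> V \<Longrightarrow> t \<le> y i \<Longrightarrow> t \<le> y' i"
    and "t \<le> lp_eval p y"
  shows "t \<le> lp_eval p y'"
  using assms by (induction p) (auto simp: le_max_iff_disj)

lemma lp_eval_min_max_at_threshold:
  assumes V: "lp_vars p \<subseteq> V" and incl: "\<And>i. i \<in> V \<Longrightarrow> t \<le> y i \<Longrightarrow> t \<le> y' i"
  shows "t \<le> lp_eval p (\<lambda>i. min (y i) (y' i)) \<longleftrightarrow> t \<le> min (lp_eval p y) (lp_eval p y')"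
    and "t \<le> lp_eval p (\<lambda>i. max (y i) (y' i)) \<longleftrightarrow> t \<le> max (lp_eval p y) (lp_eval p y')"
proof -
  have y_y': "t \<le> lp_eval p y \<Longrightarrow> t \<le> lp_eval p y'"
    using lp_eval_threshold_mono[OF V incl] .
  have "t \<le> lp_eval p (\<lambda>i. min (y i) (y' i)) \<longleftrightarrow> t \<le> lp_eval p y"
    using lp_eval_threshold_mono[OF V, of t y "\<lambda>i. min (y i) (y' i)"]
      lp_eval_threshold_mono[OF V, of t "\<lambda>i. min (y i) (y' i)" y] incl by auto
  with y_y' show "t \<le> lp_eval p (\<lambda>i. min (y i) (y' i)) \<longleftrightarrow> t \<le> min (lp_eval p y) (lp_eval p y')"
    by auto
  have "t \<le> lp_eval p (\<lambda>i. max (y i) (y' i)) \<longleftrightarrow> t \<le> lp_eval p y'"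
    using lp_eval_threshold_mono[OF V, of t y' "\<lambda>i. max (y i) (y' i)"]
      lp_eval_threshold_mono[OF V, of t "\<lambda>i. max (y i) (y' i)" y'] incl
    by (auto simp: le_max_iff_disj)
  with y_y' show "t \<le> lp_eval p (\<lambda>i. max (y i) (y' i)) \<longleftrightarrow> t \<le> max (lp_eval p y) (lp_eval p y')"
    by (auto simp: le_max_iff_disj)
qed

definition concordant :: "nat set \<Rightarrow> (nat \<Rightarrow> 'a::linorder) \<Rightarrow> (nat \<Rightarrow> 'a) \<Rightarrow> bool" where
  "concordant V y y' \<longleftrightarrow> (\<forall>i\<in>V. \<forall>j\<in>V. y i \<le> y j \<or> y' j \<le> y' i)"

lemma concordant_nested:
  assumes "concordant V y y'"
  obtains "\<And>i. i \<in> V \<Longrightarrow> t \<le> y i \<Longrightarrow> t \<le> y' i"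
        | "\<And>i. i \<in> V \<Longrightarrow> t \<le> y' i \<Longrightarrow> t \<le> y i"
  using assms unfolding concordant_def by (meson order.trans not_le)

lemma ereal_eqI_thresholds:
  fixes u v :: ereal
  assumes "\<And>t. t \<le> u \<longleftrightarrow> t \<le> v"
  shows "u = v"
  using assms[of u] assms[of v] by (simp add: order.antisym)

lemma lp_eval_min_max_concordant:
  assumes V: "lp_vars p \<subseteq> V" and conc: "concordant V y y'"
  shows "lp_eval p (\<lambda>i. min (y i) (y' i)) = min (lp_eval p y) (lp_eval p y')"
    and "lp_eval p (\<lambda>i. max (y i) (y' i)) = max (lp_eval p y) (lp_eval p y')"
proof -
  have "(t \<le> lp_eval p (\<lambda>i. min (y i) (y' i)) \<longleftrightarrow> t \<le> min (lp_eval p y) (lp_eval p y')) \<and>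
        (t \<le> lp_eval p (\<lambda>i. max (y i) (y' i)) \<longleftrightarrow> t \<le> max (lp_eval p y) (lp_eval p y'))" for t
  proof (cases rule: concordant_nested[OF conc, of t])
    case 1
    then show ?thesis using lp_eval_min_max_at_threshold[OF V] by blast
  next
    case 2
    then show ?thesis using lp_eval_min_max_at_threshold[OF V, of t y' y]
      by (simp add: min.commute max.commute)
  qed
  then show "lp_eval p (\<lambda>i. min (y i) (y' i)) = min (lp_eval p y) (lp_eval p y')"
    and "lp_eval p (\<lambda>i. max (y i) (y' i)) = max (lp_eval p y) (lp_eval p y')"
    by (blast intro: ereal_eqI_thresholds)+
qed

definition sorted_along :: "nat \<Rightarrow> (nat \<Rightarrow> nat) \<Rightarrow> (nat \<Rightarrow> 'a::order) \<Rightarrow> bool" where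
  "sorted_along n \<sigma> x \<longleftrightarrow> (\<forall>i j. 1 \<le> i \<and> i \<le> j \<and> j \<le> n \<longrightarrow> x (\<sigma> i) \<le> x (\<sigma> j))"

lemma comonotonic_iff:
  "comonotonic n x x' \<longleftrightarrow>
     (\<exists>\<sigma>. \<sigma> permutes {1..n} \<and> sorted_along n \<sigma> x \<and> sorted_along n \<sigma> x')"
  unfolding comonotonic_def sorted_along_def by blast

lemma sorted_along_concordant:
  assumes \<sigma>: "\<sigma> permutes {1..n}" and "sorted_along n \<sigma> x" and "sorted_along n \<sigma> x'"
  shows "concordant {1..n} x x'"
  unfolding concordant_def
proof (intro ballI)
  fix i j :: nat assume "i \<in> {1..n}" "j \<in> {1..n}"
  then have ranks: "inv \<sigma> i \<in> {1..n}" "inv \<sigma> j \<in> {1..n}"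
    using permutes_in_image[OF permutes_inv[OF \<sigma>]] by auto
  have "x (\<sigma> (inv \<sigma> i)) \<le> x (\<sigma> (inv \<sigma> j)) \<or> x' (\<sigma> (inv \<sigma> j)) \<le> x' (\<sigma> (inv \<sigma> i))"
    using assms(2,3) ranks unfolding sorted_along_def by (cases "inv \<sigma> i \<le> inv \<sigma> j") auto
  then show "x i \<le> x j \<or> x' j \<le> x' i"
    by (simp add: permutes_inverses(1)[OF \<sigma>])
qed

lemma concordant_mono_on:
  assumes "concordant V x x'" and "mono_on J \<phi>"
    and "\<And>i. i \<in> V \<Longrightarrow> x i \<in> J" and "\<And>i. i \<in> V \<Longrightarrow> x' i \<in> J"
  shows "concordant V (\<lambda>i. \<phi> (x i)) (\<lambda>i. \<phi> (x' i))"
  using assms unfolding concordant_def by (meson mono_onD)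

lemma mono_on_min_max:
  fixes \<phi> :: "'a::linorder \<Rightarrow> 'b::linorder"
  assumes "mono_on J \<phi>" and "u \<in> J" and "v \<in> J"
  shows "\<phi> (min u v) = min (\<phi> u) (\<phi> v)" and "\<phi> (max u v) = max (\<phi> u) (\<phi> v)"
  using assms by (auto simp: min_def max_def dest: mono_onD intro: order.antisym)

text \<open>First half of the corollary: quasi-polynomial functions are comonotonically modular,
  since on a comonotonic pair they map meet and join to the min and max of the two values.\<close>
lemma quasi_polynomial_comonotonically_modular:
  assumes "quasi_polynomial n J f"
  shows "comonotonically_modular n J f"
  unfolding comonotonically_modular_def
proof (intro ballI impI)
  obtain p \<phi> where pV: "lp_vars p \<subseteq> {1..n}" and mono: "mono_on J \<phi>"
    and f_eq: "\<And>x. x \<in> tuples n J \<Longrightarrow> ereal (f x) = lp_eval p (\<lambda>i. \<phi> (x i))"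
    using assms unfolding quasi_polynomial_def by blast
  fix x x' assume x: "x \<in> tuples n J" and x': "x' \<in> tuples n J" and "comonotonic n x x'"
  then have xJ: "\<And>i. i \<in> {1..n} \<Longrightarrow> x i \<in> J" and x'J: "\<And>i. i \<in> {1..n} \<Longrightarrow> x' i \<in> J"
    by (auto simp: tuples_def)
  have "concordant {1..n} x x'"
    using \<open>comonotonic n x x'\<close> sorted_along_concordant unfolding comonotonic_iff by blast
  then have conc: "concordant {1..n} (\<lambda>i. \<phi> (x i)) (\<lambda>i. \<phi> (x' i))"
    using concordant_mono_on mono xJ x'J by blast
  have "tmin n x x' \<in> tuples n J" "tmax n x x' \<in> tuples n J"
    using xJ x'J by (auto simp: tuples_def tmin_def tmax_def min_def max_def)
  moreover have "lp_eval p (\<lambda>i. \<phi> (tmin n x x' i)) = lp_eval p (\<lambda>i. min (\<phi> (x i)) (\<phi> (x' i)))"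
    and "lp_eval p (\<lambda>i. \<phi> (tmax n x x' i)) = lp_eval p (\<lambda>i. max (\<phi> (x i)) (\<phi> (x' i)))"
    using pV mono_on_min_max[OF mono xJ x'J]
    by (auto intro: lp_eval_cong simp: tmin_def tmax_def)
  ultimately have "ereal (f (tmin n x x')) = min (ereal (f x)) (ereal (f x'))"
    and "ereal (f (tmax n x x')) = max (ereal (f x)) (ereal (f x'))"
    using lp_eval_min_max_concordant[OF pV conc] f_eq x x' by simp_all
  then have "f (tmin n x x') = min (f x) (f x')" and "f (tmax n x x') = max (f x) (f x')"
    by (simp_all add: min_def max_def split: if_splits)
  then show "f x + f x' = f (tmin n x x') + f (tmax n x x')"
    by (simp add: min_def max_def)
qed

definition step_tuple :: "nat \<Rightarrow> (nat \<Rightarrow> nat) \<Rightarrow> ereal \<Rightarrow> nat \<Rightarrow> ereal \<Rightarrow> nat \<Rightarrow> ereal" where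
  "step_tuple n \<sigma> a k t = (\<lambda>j\<in>{1..n}. if inv \<sigma> j < k then a else t)"

definition truncation :: "nat \<Rightarrow> (nat \<Rightarrow> nat) \<Rightarrow> (nat \<Rightarrow> ereal) \<Rightarrow> nat \<Rightarrow> nat \<Rightarrow> ereal" where
  "truncation n \<sigma> x k = (\<lambda>j\<in>{1..n}. x (\<sigma> (min (inv \<sigma> j) k)))"

text \<open>From here on \<open>\<sigma>\<close> is a fixed permutation of \<open>{1..n}\<close>; \<open>inv \<sigma> j\<close> is the rank of coordinate \<open>j\<close>.\<close>
context
  fixes n :: nat and \<sigma> :: "nat \<Rightarrow> nat"
  assumes \<sigma>: "\<sigma> permutes {1..n}"
begin

lemma rank_in: "j \<in> {1..n} \<Longrightarrow> inv \<sigma> j \<in> {1..n}"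
  and perm_in: "i \<in> {1..n} \<Longrightarrow> \<sigma> i \<in> {1..n}"
  and perm_rank [simp]: "\<sigma> (inv \<sigma> j) = j"
  and rank_perm [simp]: "inv \<sigma> (\<sigma> i) = i"
  using permutes_in_image[OF permutes_inv[OF \<sigma>]] permutes_in_image[OF \<sigma>] permutes_inverses[OF \<sigma>]
  by auto

lemma step_tuple_in_tuples:
  assumes "a \<in> J" and "t \<in> J"
  shows "step_tuple n \<sigma> a k t \<in> tuples n J"
  using assms by (auto simp: step_tuple_def tuples_def)

lemma sorted_alongI:
  assumes "\<And>i j. i \<in> {1..n} \<Longrightarrow> j \<in> {1..n} \<Longrightarrow> i \<le> j \<Longrightarrow> x (\<sigma> i) \<le> x (\<sigma> j)"
  shows "sorted_along n \<sigma> x"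
  using assms unfolding sorted_along_def by simp

lemma step_tuple_sorted:
  assumes "a \<le> t"
  shows "sorted_along n \<sigma> (step_tuple n \<sigma> a k t)"
proof (rule sorted_alongI)
  fix i j assume "i \<in> {1..n}" "j \<in> {1..n}" "i \<le> j"
  moreover from this have "\<sigma> i \<in> {1..n}" "\<sigma> j \<in> {1..n}" by (simp_all only: perm_in)
  ultimately show "step_tuple n \<sigma> a k t (\<sigma> i) \<le> step_tuple n \<sigma> a k t (\<sigma> j)"
    using assms by (simp add: step_tuple_def)
qed

lemma truncation_in_tuples:
  assumes "x \<in> tuples n J" and "1 \<le> k"
  shows "truncation n \<sigma> x k \<in> tuples n J"
proof -
  have "x (\<sigma> (min (inv \<sigma> j) k)) \<in> J" if "j \<in> {1..n}" for j
  proof -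
    have "min (inv \<sigma> j) k \<in> {1..n}"
      using rank_in[OF that] assms(2) by auto
    then have "\<sigma> (min (inv \<sigma> j) k) \<in> {1..n}" by (rule perm_in)
    then show ?thesis using assms(1) by (auto simp: tuples_def)
  qed
  then show ?thesis by (auto simp: truncation_def tuples_def)
qed

lemma truncation_sorted:
  assumes "sorted_along n \<sigma> x" and "1 \<le> k"
  shows "sorted_along n \<sigma> (truncation n \<sigma> x k)"
proof (rule sorted_alongI)
  fix i j assume ij: "i \<in> {1..n}" "j \<in> {1..n}" "i \<le> j"
  then have "\<sigma> i \<in> {1..n}" "\<sigma> j \<in> {1..n}" by (simp_all only: perm_in)
  then have "truncation n \<sigma> x k (\<sigma> i) = x (\<sigma> (min i k))"
    and "truncation n \<sigma> x k (\<sigma> j) = x (\<sigma> (min j k))"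
    by (simp_all add: truncation_def)
  moreover have "x (\<sigma> (min i k)) \<le> x (\<sigma> (min j k))"
    using assms(1)[unfolded sorted_along_def, rule_format, of "min i k" "min j k"] assms(2) ij
    by (auto simp: min_def)
  ultimately show "truncation n \<sigma> x k (\<sigma> i) \<le> truncation n \<sigma> x k (\<sigma> j)" by simp
qed

lemma truncation_first: "truncation n \<sigma> x 1 = step_tuple n \<sigma> a 1 (x (\<sigma> 1))"
proof
  fix j
  show "truncation n \<sigma> x 1 j = step_tuple n \<sigma> a 1 (x (\<sigma> 1)) j"
  proof (cases "j \<in> {1..n}")
    case True
    then have "min (inv \<sigma> j) 1 = 1" "\<not> inv \<sigma> j < 1" using rank_in[OF True] by auto
    with True show ?thesis by (simp add: truncation_def step_tuple_def)
  next
    case False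
    then show ?thesis by (auto simp: truncation_def step_tuple_def)
  qed
qed

lemma truncation_last:
  assumes "x \<in> tuples n J"
  shows "truncation n \<sigma> x n = x"
proof
  fix j
  show "truncation n \<sigma> x n j = x j"
  proof (cases "j \<in> {1..n}")
    case True
    then have "min (inv \<sigma> j) n = inv \<sigma> j" using rank_in[OF True] by auto
    with True show ?thesis by (simp add: truncation_def)
  next
    case False
    with assms show ?thesis by (auto simp: truncation_def tuples_def PiE_arb[of x])
  qed
qed

text \<open>The key computation: the \<open>k\<close>-th truncation of a sorted tuple and the step tuple
  at position \<open>k + 1\<close> are comonotonic, their meet is again a step tuple and their
  join is the next truncation.\<close>
lemma truncation_tmin_tmax:
  assumes sorted: "sorted_along n \<sigma> x" and least: "\<And>i. i \<in> {1..n} \<Longrightarrow> a \<le> x i"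
    and k: "1 \<le> k" "k < n"
  shows "tmin n (truncation n \<sigma> x k) (step_tuple n \<sigma> a (Suc k) (x (\<sigma> (Suc k))))
           = step_tuple n \<sigma> a (Suc k) (x (\<sigma> k))"
    and "tmax n (truncation n \<sigma> x k) (step_tuple n \<sigma> a (Suc k) (x (\<sigma> (Suc k))))
           = truncation n \<sigma> x (Suc k)"
proof -
  have step: "x (\<sigma> k) \<le> x (\<sigma> (Suc k))"
    using sorted k unfolding sorted_along_def by auto
  let ?z = "truncation n \<sigma> x k" and ?e = "step_tuple n \<sigma> a (Suc k) (x (\<sigma> (Suc k)))"
  have pointwise: "min (?z j) (?e j) = step_tuple n \<sigma> a (Suc k) (x (\<sigma> k)) j \<and>
        max (?z j) (?e j) = truncation n \<sigma> x (Suc k) j" if j: "j \<in> {1..n}" for j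
  proof (cases "inv \<sigma> j \<le> k")
    case True
    have "a \<le> x (\<sigma> (inv \<sigma> j))" using least[OF j] by simp
    with True j show ?thesis
      by (simp add: truncation_def step_tuple_def min_absorb2 max_absorb1 min_absorb1)
  next
    case False
    with j step show ?thesis
      by (simp add: truncation_def step_tuple_def min_absorb1 max_absorb2 min_absorb2)
  qed
  show "tmin n ?z ?e = step_tuple n \<sigma> a (Suc k) (x (\<sigma> k))"
  proof
    fix j show "tmin n ?z ?e j = step_tuple n \<sigma> a (Suc k) (x (\<sigma> k)) j"
      using pointwise[of j] by (cases "j \<in> {1..n}") (auto simp: tmin_def step_tuple_def)
  qed
  show "tmax n ?z ?e = truncation n \<sigma> x (Suc k)"
  proof
    fix j show "tmax n ?z ?e j = truncation n \<sigma> x (Suc k) j"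
      using pointwise[of j] by (cases "j \<in> {1..n}") (auto simp: tmax_def truncation_def)
  qed
qed

lemma modular_truncation_Suc:
  assumes modular: "comonotonically_modular n J f"
    and a: "a \<in> J" "\<And>t. t \<in> J \<Longrightarrow> a \<le> t"
    and x: "x \<in> tuples n J" "sorted_along n \<sigma> x" and k: "1 \<le> k" "k < n"
  shows "f (truncation n \<sigma> x (Suc k)) = f (truncation n \<sigma> x k)
           + f (step_tuple n \<sigma> a (Suc k) (x (\<sigma> (Suc k))))
           - f (step_tuple n \<sigma> a (Suc k) (x (\<sigma> k)))"
proof -
  have xJ: "x i \<in> J" if "i \<in> {1..n}" for i
    using x(1) that by (auto simp: tuples_def)
  have "x (\<sigma> (Suc k)) \<in> J"
    using k by (intro xJ perm_in) simp
  then have e: "step_tuple n \<sigma> a (Suc k) (x (\<sigma> (Suc k))) \<in> tuples n J"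
    "sorted_along n \<sigma> (step_tuple n \<sigma> a (Suc k) (x (\<sigma> (Suc k))))"
    using a by (simp_all add: step_tuple_in_tuples step_tuple_sorted)
  have z: "truncation n \<sigma> x k \<in> tuples n J" "sorted_along n \<sigma> (truncation n \<sigma> x k)"
    using x k by (simp_all add: truncation_in_tuples truncation_sorted)
  have "comonotonic n (truncation n \<sigma> x k) (step_tuple n \<sigma> a (Suc k) (x (\<sigma> (Suc k))))"
    unfolding comonotonic_iff using \<sigma> z(2) e(2) by blast
  with modular z(1) e(1) have "f (truncation n \<sigma> x k) + f (step_tuple n \<sigma> a (Suc k) (x (\<sigma> (Suc k))))
      = f (step_tuple n \<sigma> a (Suc k) (x (\<sigma> k))) + f (truncation n \<sigma> x (Suc k))"
    using truncation_tmin_tmax[OF x(2) _ k] a xJ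
    unfolding comonotonically_modular_def by metis
  then show ?thesis by simp
qed

theorem comonotonically_modular_sum_decomposition:
  assumes modular: "comonotonically_modular n J f" and n: "1 \<le> n"
    and a: "a \<in> J" "\<And>t. t \<in> J \<Longrightarrow> a \<le> t"
  shows "\<exists>F :: nat \<Rightarrow> ereal \<Rightarrow> real. \<forall>x \<in> tuples n J.
           sorted_along n \<sigma> x \<longrightarrow> f x = (\<Sum>i=1..n. F i (x (\<sigma> i)))"
proof (intro exI ballI impI)
  define F where "F i t = f (step_tuple n \<sigma> a i t)
    - (if i < n then f (step_tuple n \<sigma> a (Suc i) t) else 0)" for i t
  fix x assume x: "x \<in> tuples n J" "sorted_along n \<sigma> x"
  have telescope: "f (truncation n \<sigma> x k) = (\<Sum>i=1..k. F i (x (\<sigma> i)))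
      + (if k < n then f (step_tuple n \<sigma> a (Suc k) (x (\<sigma> k))) else 0)"
    if "1 \<le> k" and "k \<le> n" for k
    using that
  proof (induction k rule: nat_induct_at_least)
    case base
    show ?case using truncation_first[of x a] by (simp add: F_def)
  next
    case (Suc k)
    then show ?case
      using modular_truncation_Suc[OF modular a x \<open>1 \<le> k\<close>] by (simp add: F_def)
  qed
  show "f x = (\<Sum>i=1..n. F i (x (\<sigma> i)))"
    using telescope[OF n order.refl] truncation_last[OF x(1)] by simp
qed

end

theorem corollary21:
  fixes n :: nat and a b :: ereal and f :: "(nat \<Rightarrow> ereal) \<Rightarrow> real"
  assumes "n \<ge> 1" and "a \<le> b"
    and "quasi_polynomial n {a..b} f"
  shows "comonotonically_modular n {a..b} f \<and>
    (\<forall>\<sigma>. \<sigma> permutes {1..n} \<longrightarrow>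
       (\<exists>F :: nat \<Rightarrow> ereal \<Rightarrow> real. \<forall>x \<in> tuples n {a..b}.
          (\<forall>i j. 1 \<le> i \<and> i \<le> j \<and> j \<le> n \<longrightarrow> x (\<sigma> i) \<le> x (\<sigma> j)) \<longrightarrow>
          f x = (\<Sum>i=1..n. F i (x (\<sigma> i)))))"
proof -
  have modular: "comonotonically_modular n {a..b} f"
    using quasi_polynomial_comonotonically_modular[OF assms(3)] .
  moreover have "\<exists>F :: nat \<Rightarrow> ereal \<Rightarrow> real. \<forall>x \<in> tuples n {a..b}.
          (\<forall>i j. 1 \<le> i \<and> i \<le> j \<and> j \<le> n \<longrightarrow> x (\<sigma> i) \<le> x (\<sigma> j)) \<longrightarrow>
          f x = (\<Sum>i=1..n. F i (x (\<sigma> i)))" if "\<sigma> permutes {1..n}" for \<sigma>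
    using comonotonically_modular_sum_decomposition[OF that modular assms(1), of a] assms(2)
    unfolding sorted_along_def by simp
  ultimately show ?thesis by blast
qed

end
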